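(* Let $\epsilon>0$ and $p=e^{\epsilon}/(e^{\epsilon}+1)$. Let $n\ge1$ users $u_1,\dots,u_n$, where user $u_i$ holds a value $v_i\in[-1,1]$ and a privacy preference $\epsilon_u^i\in\mathbb{R}$. Each user independently sets $v_i'=v_i$ if $\epsilon\le\epsilon_u^i$ and $v_i'=\bot$ otherwise, samples $s_i\in\{0,1\}$ uniformly at random, and draws $b_i\in\{0,1\}$ with $$\Pr[b_i=1]=\begin{cases}\frac{1-e^{\epsilon}}{1+e^{\epsilon}}\cdot\frac{v_i'}{2}+\frac12 & \text{if } s_i=0,\ v_i'\in[-1,1],\\ \frac{e^{\epsilon}-1}{e^{\epsilon}+1}\cdot\frac{v_i'}{2}+\frac12 & \text{if } s_i=1,\ v_i'\in[-1,1],\\ \frac{1}{e^{\epsilon}+1} & \text{if } v_i'=\bot \ (\text{either } s_i),\end{cases}$$ and reports $\langle s_i,b_i\rangle$. Let $$f_{\mathrm{POS}}=\frac{\#\{i:\langle s_i,b_i\rangle=\langle1,1\rangle\}}{\#\{i:s_i=1\}},\qquad f_{\mathrm{NEG}}=\frac{\#\{i:\langle s_i,b_i\rangle=\langle0,1\rangle\}}{\#\{i:s_i=0\}},$$ let $s=\sum_{i:\,\epsilon_u^i\ge\epsilon} v_i$ be the sum of the truthfully provided values and $f_\bot=\#\{i:\epsilon_u^i<\epsilon\}/n$ the fraction of users providing a null value, and define $$s^*=\frac{n}{2p-1}\left(f_{\mathrm{POS}}-f_{\mathrm{NEG}}\right),\qquad f_\bot^*=\frac{1-f_{\mathrm{POS}}-f_{\mathrm{NEG}}}{2p-1}.$$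 Then, conditionally on the event that $\#\{i:s_i=1\}\ge1$ and $\#\{i:s_i=0\}\ge1$, $s^*$ and $f_\bot^*$ are unbiased estimators of $s$ and $f_\bot$ respectively, i.e. $\mathbb{E}[s^*]=s$ and $\mathbb{E}[f_\bot^*]=f_\bot$.
   Context: All randomness is over the users' independent coin flips; the values $v_i$ and preferences $\epsilon_u^i$ are fixed. *)

theory Defs
  imports "HOL-Probability.Probability"
begin

definition p_eps :: "real \<Rightarrow> real" where
  "p_eps \<epsilon> = exp \<epsilon> / (exp \<epsilon> + 1)"

definition v_prime :: "real \<Rightarrow> real \<Rightarrow> real \<Rightarrow> real option" where
  "v_prime \<epsilon> v eu = (if \<epsilon> \<le> eu then Some v else None)"

text \<open>Probability that b = 1 given s (True encodes s = 1) and the value v'.\<close>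
definition prob_b1 :: "real \<Rightarrow> real option \<Rightarrow> bool \<Rightarrow> real" where
  "prob_b1 \<epsilon> v' s = (case v' of
      None \<Rightarrow> 1 / (exp \<epsilon> + 1)
    | Some x \<Rightarrow> (if s then (exp \<epsilon> - 1) / (exp \<epsilon> + 1) * (x / 2) + 1/2
                 else (1 - exp \<epsilon>) / (1 + exp \<epsilon>) * (x / 2) + 1/2))"

text \<open>Distribution of one user's report (s, b); True encodes 1, False encodes 0.\<close>
definition user_pmf :: "real \<Rightarrow> real \<Rightarrow> real \<Rightarrow> (bool \<times> bool) pmf" where
  "user_pmf \<epsilon> v eu =
     bind_pmf (bernoulli_pmf (1/2)) (\<lambda>s.
     bind_pmf (bernoulli_pmf (prob_b1 \<epsilon> (v_prime \<epsilon> v eu) s)) (\<lambda>b.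
     return_pmf (s, b)))"

definition reports_pmf :: "real \<Rightarrow> nat \<Rightarrow> (nat \<Rightarrow> real) \<Rightarrow> (nat \<Rightarrow> real) \<Rightarrow> (nat \<Rightarrow> bool \<times> bool) pmf" where
  "reports_pmf \<epsilon> n v eu = Pi_pmf {..<n} (False, False) (\<lambda>i. user_pmf \<epsilon> (v i) (eu i))"

definition f_POS :: "nat \<Rightarrow> (nat \<Rightarrow> bool \<times> bool) \<Rightarrow> real" where
  "f_POS n \<omega> = real (card {i. i < n \<and> \<omega> i = (True, True)}) / real (card {i. i < n \<and> fst (\<omega> i)})"

definition f_NEG :: "nat \<Rightarrow> (nat \<Rightarrow> bool \<times> bool) \<Rightarrow> real" where
  "f_NEG n \<omega> = real (card {i. i < n \<and> \<omega> i = (False, True)}) / real (card {i. i < n \<and> \<not> fst (\<omega> i)})"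

definition s_star :: "real \<Rightarrow> nat \<Rightarrow> (nat \<Rightarrow> bool \<times> bool) \<Rightarrow> real" where
  "s_star \<epsilon> n \<omega> = real n / (2 * p_eps \<epsilon> - 1) * (f_POS n \<omega> - f_NEG n \<omega>)"

definition f_bot_star :: "real \<Rightarrow> nat \<Rightarrow> (nat \<Rightarrow> bool \<times> bool) \<Rightarrow> real" where
  "f_bot_star \<epsilon> n \<omega> = (1 - f_POS n \<omega> - f_NEG n \<omega>) / (2 * p_eps \<epsilon> - 1)"

definition both_groups :: "nat \<Rightarrow> (nat \<Rightarrow> bool \<times> bool) set" where
  "both_groups n = {\<omega>. card {i. i < n \<and> fst (\<omega> i)} \<ge> 1 \<and> card {i. i < n \<and> \<not> fst (\<omega> i)} \<ge> 1}"

end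

theory Submission
  imports Defs
begin

(* Condition on the vector s of fair coins. Given s, the bits b_i are independent with
   Pr[b_i = 1] = r_i(s_i), so the number of users of group b (those with s_i = b) reporting 1 has
   expectation sum_{s_i = b} r_i(b), while the group sizes and the event that both groups are
   non-empty are determined by s. The factor 1/#{i. s_i = b} then averages out: the coins are
   exchangeable and the event is symmetric, so E[1_mixed(s) [s_i = b] / #{j. s_j = b}] is the same
   for all n users, and these n expectations add up to Pr[mixed]. Hence conditionally
   E[f_b] = (1/n) sum_i r_i(b). For the mechanism, r_i(1) - r_i(0) = (2p - 1) v_i for truthful
   users and 0 for null users, and 1 - r_i(1) - r_i(0) = 2p - 1 for null users and 0 otherwise. *)

lemma finite_set_Pi_pmf:
  assumes "finite A" "\<And>x. x \<in> A \<Longrightarrow> finite (set_pmf (p x))"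
  shows "finite (set_pmf (Pi_pmf A d p))"
  using assms by (intro finite_subset[OF set_Pi_pmf_subset'] finite_PiE_dflt) auto

lemma expectation_bind_pmf_finite:
  fixes h :: "'b \<Rightarrow> real"
  assumes "finite (set_pmf p)" "\<And>x. x \<in> set_pmf p \<Longrightarrow> finite (set_pmf (f x))"
  shows "measure_pmf.expectation (p \<bind> f) h =
         measure_pmf.expectation p (\<lambda>x. measure_pmf.expectation (f x) h)"
  using pmf_expectation_bind[of "set_pmf p" f p h] assms
    integral_measure_pmf[OF assms(1), of p "\<lambda>x. measure_pmf.expectation (f x) h"]
  by simp

lemma expectation_cond_pmf_finite:
  fixes X :: "'a \<Rightarrow> real"
  assumes "finite (set_pmf M)" "measure_pmf.prob M B \<noteq> 0"
  shows "measure_pmf.expectation (cond_pmf M B) X =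
         measure_pmf.expectation M (\<lambda>x. indicator B x * X x) / measure_pmf.prob M B"
proof -
  have nonempty: "set_pmf M \<inter> B \<noteq> {}"
    using assms(2) measure_pmf_zero_iff by blast
  have "measure_pmf.expectation (cond_pmf M B) X = (\<Sum>x\<in>set_pmf M. pmf (cond_pmf M B) x * X x)"
    using integral_measure_pmf[OF assms(1), of "cond_pmf M B" X] nonempty by auto
  also have "\<dots> = (\<Sum>x\<in>set_pmf M. pmf M x * (indicator B x * X x)) / measure_pmf.prob M B"
    by (auto simp: pmf_cond[OF nonempty] sum_divide_distrib indicator_def intro!: sum.cong)
  also have "(\<Sum>x\<in>set_pmf M. pmf M x * (indicator B x * X x)) =
             measure_pmf.expectation M (\<lambda>x. indicator B x * X x)"
    using integral_measure_pmf[OF assms(1), of M "\<lambda>x. indicator B x * X x"] by auto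
  finally show ?thesis .
qed

lemma finite_set_cond_pmf:
  "finite (set_pmf M) \<Longrightarrow> measure_pmf.prob M B \<noteq> 0 \<Longrightarrow> finite (set_pmf (cond_pmf M B))"
  by (simp add: measure_pmf_zero_iff)

lemma expectation_Pi_pmf_card:
  assumes "finite A"
  shows "measure_pmf.expectation (Pi_pmf A d p) (\<lambda>\<omega>. real (card {i\<in>A. \<omega> i \<in> X})) =
         (\<Sum>i\<in>A. measure_pmf.prob (p i) X)"
proof -
  have "real (card {i\<in>A. \<omega> i \<in> X}) = (\<Sum>i\<in>A. indicator ((\<lambda>\<omega>. \<omega> i) -` X) \<omega>)" for \<omega>
    using assms by (simp add: indicator_def of_bool_def sum.inter_filter[symmetric])
  then have "measure_pmf.expectation (Pi_pmf A d p) (\<lambda>\<omega>. real (card {i\<in>A. \<omega> i \<in> X})) =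
             (\<Sum>i\<in>A. measure_pmf.prob (Pi_pmf A d p) ((\<lambda>\<omega>. \<omega> i) -` X))"
    by (simp add: Bochner_Integration.integral_sum measure_pmf.integrable_const_bound[where B=1])
  also have "\<dots> = (\<Sum>i\<in>A. measure_pmf.prob (p i) X)"
    using assms by (intro sum.cong) (auto simp del: measure_map_pmf
        simp: measure_map_pmf[symmetric] Pi_pmf_component)
  finally show ?thesis .
qed

lemma Pi_pmf_comp_permutes:
  assumes "finite A" "\<pi> permutes A"
  shows "map_pmf (\<lambda>g. g \<circ> \<pi>) (Pi_pmf A d (\<lambda>_. q)) = Pi_pmf A d (\<lambda>_. q)"
  using assms by (intro Pi_pmf_bij_betw[symmetric]) (auto simp: permutes_imp_bij permutes_not_in)

lemma card_comp_permutes: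
  assumes "\<pi> permutes A"
  shows "card {k\<in>A. P ((g \<circ> \<pi>) k)} = card {k\<in>A. P (g k)}"
proof -
  have "bij_betw \<pi> {k\<in>A. P (g (\<pi> k))} {k\<in>A. P (g k)}"
    using assms unfolding bij_betw_def
    by (auto simp: permutes_in_image image_iff intro: inj_on_subset[OF permutes_inj_on[OF assms]])
       (metis permutes_inverses(1)[OF assms] permutes_in_image[OF permutes_inv[OF assms]])
  then show ?thesis by (simp add: bij_betw_same_card)
qed

lemma expectation_Pi_pmf_exchange:
  fixes G :: "('i \<Rightarrow> 'a) \<Rightarrow> real"
  assumes "finite A" "i \<in> A" "j \<in> A" "\<And>g. G (g \<circ> Transposition.transpose i j) = G g"
  shows "measure_pmf.expectation (Pi_pmf A d (\<lambda>_. q)) (\<lambda>g. G g * h (g i)) =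
         measure_pmf.expectation (Pi_pmf A d (\<lambda>_. q)) (\<lambda>g. G g * h (g j))"
proof -
  have "measure_pmf.expectation (Pi_pmf A d (\<lambda>_. q)) (\<lambda>g. G g * h (g j)) =
        measure_pmf.expectation (map_pmf (\<lambda>g. g \<circ> Transposition.transpose i j) (Pi_pmf A d (\<lambda>_. q)))
          (\<lambda>g. G g * h (g j))"
    by (simp only: Pi_pmf_comp_permutes[OF assms(1) permutes_swap_id[OF assms(2,3)]])
  also have "\<dots> = measure_pmf.expectation (Pi_pmf A d (\<lambda>_. q)) (\<lambda>g. G g * h (g i))"
    using assms(4) by simp
  finally show ?thesis ..
qed

lemma expectation_Pi_pmf_average:
  fixes G :: "('i \<Rightarrow> 'a) \<Rightarrow> real"
  assumes "finite A" "finite (set_pmf q)" "i \<in> A"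
    and "\<And>j g. j \<in> A \<Longrightarrow> G (g \<circ> Transposition.transpose i j) = G g"
  shows "real (card A) * measure_pmf.expectation (Pi_pmf A d (\<lambda>_. q)) (\<lambda>g. G g * h (g i)) =
         measure_pmf.expectation (Pi_pmf A d (\<lambda>_. q)) (\<lambda>g. G g * (\<Sum>j\<in>A. h (g j)))"
proof -
  have "measure_pmf.expectation (Pi_pmf A d (\<lambda>_. q)) (\<lambda>g. G g * (\<Sum>j\<in>A. h (g j))) =
        (\<Sum>j\<in>A. measure_pmf.expectation (Pi_pmf A d (\<lambda>_. q)) (\<lambda>g. G g * h (g j)))"
    using assms(1,2)
    by (simp add: sum_distrib_left integrable_measure_pmf_finite finite_set_Pi_pmf)
  also have "\<dots> = (\<Sum>j\<in>A. measure_pmf.expectation (Pi_pmf A d (\<lambda>_. q)) (\<lambda>g. G g * h (g i)))"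
    using assms by (intro sum.cong refl expectation_Pi_pmf_exchange[symmetric])
  finally show ?thesis by simp
qed

definition coins_pmf :: "nat \<Rightarrow> (nat \<Rightarrow> bool) pmf" where
  "coins_pmf n = Pi_pmf {..<n} False (\<lambda>_. bernoulli_pmf (1/2))"

definition reports_given_coins ::
    "nat \<Rightarrow> (nat \<Rightarrow> bool \<Rightarrow> real) \<Rightarrow> (nat \<Rightarrow> bool) \<Rightarrow> (nat \<Rightarrow> bool \<times> bool) pmf" where
  "reports_given_coins n r s =
     Pi_pmf {..<n} (False, False) (\<lambda>i. map_pmf (Pair (s i)) (bernoulli_pmf (r i (s i))))"

definition coin_reports_pmf :: "nat \<Rightarrow> (nat \<Rightarrow> bool \<Rightarrow> real) \<Rightarrow> (nat \<Rightarrow> bool \<times> bool) pmf" where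
  "coin_reports_pmf n r =
     Pi_pmf {..<n} (False, False)
       (\<lambda>i. bernoulli_pmf (1/2) \<bind> (\<lambda>s. map_pmf (Pair s) (bernoulli_pmf (r i s))))"

definition coins_mixed :: "nat \<Rightarrow> (nat \<Rightarrow> bool) set" where
  "coins_mixed n = {s. \<forall>b. card {i. i < n \<and> s i = b} \<noteq> 0}"

definition group_freq :: "nat \<Rightarrow> bool \<Rightarrow> (nat \<Rightarrow> bool \<times> bool) \<Rightarrow> real" where
  "group_freq n b \<omega> =
     real (card {i. i < n \<and> \<omega> i = (b, True)}) / real (card {i. i < n \<and> fst (\<omega> i) = b})"

lemma f_POS_eq_group_freq: "f_POS n = group_freq n True"
  by (simp add: fun_eq_iff f_POS_def group_freq_def)

lemma f_NEG_eq_group_freq: "f_NEG n = group_freq n False"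
  by (simp add: fun_eq_iff f_NEG_def group_freq_def)

lemma reports_pmf_eq_coin_reports_pmf:
  "reports_pmf \<epsilon> n v eu = coin_reports_pmf n (\<lambda>i. prob_b1 \<epsilon> (v_prime \<epsilon> (v i) (eu i)))"
  by (simp add: reports_pmf_def coin_reports_pmf_def user_pmf_def map_pmf_def)

lemma coin_reports_pmf_eq_bind: "coin_reports_pmf n r = coins_pmf n \<bind> reports_given_coins n r"
  unfolding coin_reports_pmf_def coins_pmf_def reports_given_coins_def
  by (simp add: Pi_pmf_bind[where d'=False])

lemma finite_set_coins_pmf [simp]: "finite (set_pmf (coins_pmf n))"
  unfolding coins_pmf_def by (simp add: finite_set_Pi_pmf)

lemma finite_set_reports_given_coins [simp]: "finite (set_pmf (reports_given_coins n r s))"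
  unfolding reports_given_coins_def by (simp add: finite_set_Pi_pmf)

lemma finite_set_coin_reports_pmf [simp]: "finite (set_pmf (coin_reports_pmf n r))"
  unfolding coin_reports_pmf_def by (simp add: finite_set_Pi_pmf)

lemma fst_in_set_reports_given_coins:
  "\<omega> \<in> set_pmf (reports_given_coins n r s) \<Longrightarrow> i < n \<Longrightarrow> fst (\<omega> i) = s i"
  unfolding reports_given_coins_def by (auto simp: set_Pi_pmf PiE_dflt_def)

lemma both_groups_eq: "both_groups n = (\<lambda>\<omega>. fst \<circ> \<omega>) -` coins_mixed n"
  by (auto simp: both_groups_def coins_mixed_def all_bool_eq Suc_le_eq card_gt_0_iff)

lemma map_fst_coin_reports_pmf: "map_pmf (\<lambda>\<omega>. fst \<circ> \<omega>) (coin_reports_pmf n r) = coins_pmf n"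
proof -
  have "map_pmf (\<lambda>\<omega>. fst \<circ> \<omega>) (coin_reports_pmf n r) =
        Pi_pmf {..<n} False
          (\<lambda>i. map_pmf fst (bernoulli_pmf (1/2) \<bind> (\<lambda>s. map_pmf (Pair s) (bernoulli_pmf (r i s)))))"
    unfolding coin_reports_pmf_def by (rule Pi_pmf_map[symmetric]) auto
  then show ?thesis
    by (simp add: coins_pmf_def map_bind_pmf map_pmf_comp bind_return_pmf')
qed

lemma prob_both_groups:
  "measure_pmf.prob (coin_reports_pmf n r) (both_groups n) = measure_pmf.prob (coins_pmf n) (coins_mixed n)"
  using measure_map_pmf[of "\<lambda>\<omega>. fst \<circ> \<omega>" "coin_reports_pmf n r" "coins_mixed n"]
  by (simp only: both_groups_eq map_fst_coin_reports_pmf)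

lemma prob_map_Pair_bernoulli:
  assumes "q a \<in> {0..1}"
  shows "measure_pmf.prob (map_pmf (Pair a) (bernoulli_pmf (q a))) {(b, True)} = of_bool (a = b) * q b"
proof -
  have "Pair a -` {(b, True)} = (if a = b then {True} else {})"
    by auto
  then show ?thesis
    using assms by (simp only: measure_map_pmf) (cases "a = b"; simp add: measure_pmf_single)
qed

lemma expectation_reports_given_coins:
  assumes "\<And>i. i < n \<Longrightarrow> r i (s i) \<in> {0..1}"
  shows "measure_pmf.expectation (reports_given_coins n r s)
           (\<lambda>\<omega>. indicator (both_groups n) \<omega> * group_freq n b \<omega>) =
         indicator (coins_mixed n) s / real (card {i. i < n \<and> s i = b}) *
           (\<Sum>i<n. of_bool (s i = b) * r i b)"
proof -
  let ?c = "indicator (coins_mixed n) s / real (card {i. i < n \<and> s i = b}) :: real"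
  have "indicator (both_groups n) \<omega> * group_freq n b \<omega> =
        ?c * real (card {i\<in>{..<n}. \<omega> i \<in> {(b, True)}})"
    if "\<omega> \<in> set_pmf (reports_given_coins n r s)" for \<omega>
  proof -
    have groups: "\<And>b. {i. i < n \<and> fst (\<omega> i) = b} = {i. i < n \<and> s i = b}"
      using fst_in_set_reports_given_coins[OF that] by auto
    then have "\<omega> \<in> both_groups n \<longleftrightarrow> s \<in> coins_mixed n"
      by (simp only: both_groups_eq coins_mixed_def vimage_Collect_eq o_def mem_Collect_eq)
    then show ?thesis
      by (simp add: group_freq_def groups indicator_def)
  qed
  then have "measure_pmf.expectation (reports_given_coins n r s)
               (\<lambda>\<omega>. indicator (both_groups n) \<omega> * group_freq n b \<omega>) =
             measure_pmf.expectation (reports_given_coins n r s)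
               (\<lambda>\<omega>. ?c * real (card {i\<in>{..<n}. \<omega> i \<in> {(b, True)}}))"
    by (intro integral_cong_AE) (simp_all add: AE_measure_pmf_iff)
  also have "\<dots> = ?c * measure_pmf.expectation (reports_given_coins n r s)
               (\<lambda>\<omega>. real (card {i\<in>{..<n}. \<omega> i \<in> {(b, True)}}))"
    by (rule integral_mult_right_zero)
  also have "measure_pmf.expectation (reports_given_coins n r s)
               (\<lambda>\<omega>. real (card {i\<in>{..<n}. \<omega> i \<in> {(b, True)}})) =
             (\<Sum>i<n. of_bool (s i = b) * r i b)"
    unfolding reports_given_coins_def expectation_Pi_pmf_card[OF finite_lessThan]
    by (intro sum.cong refl prob_map_Pair_bernoulli[of "r i" for i]) (use assms in auto)
  finally show ?thesis .
qed

lemma expectation_coins_share: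
  assumes "i < n"
  shows "real n * measure_pmf.expectation (coins_pmf n)
           (\<lambda>s. indicator (coins_mixed n) s / real (card {j. j < n \<and> s j = b}) * of_bool (s i = b)) =
         measure_pmf.prob (coins_pmf n) (coins_mixed n)"
proof -
  let ?G = "\<lambda>s. indicator (coins_mixed n) s / real (card {j. j < n \<and> s j = b}) :: real"
  have "?G (s \<circ> Transposition.transpose i j) = ?G s" if "j < n" for j s
  proof -
    have "card {k. k < n \<and> (s \<circ> Transposition.transpose i j) k = c} = card {k. k < n \<and> s k = c}" for c
      using card_comp_permutes[OF permutes_swap_id[of i "{..<n}" j], of "\<lambda>x. x = c" s] assms that
      by simp
    then show ?thesis
      by (simp only: coins_mixed_def indicator_def mem_Collect_eq)
  qed
  then have "real n * measure_pmf.expectation (coins_pmf n) (\<lambda>s. ?G s * of_bool (s i = b)) =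
             measure_pmf.expectation (coins_pmf n) (\<lambda>s. ?G s * (\<Sum>j<n. of_bool (s j = b)))"
    using expectation_Pi_pmf_average[where A="{..<n}" and q="bernoulli_pmf (1/2)" and G="?G"
        and h="\<lambda>x. of_bool (x = b)"] assms
    by (simp add: coins_pmf_def)
  also have "\<dots> = measure_pmf.expectation (coins_pmf n) (indicator (coins_mixed n))"
  proof (intro Bochner_Integration.integral_cong refl)
    fix s :: "nat \<Rightarrow> bool"
    have "(\<Sum>j<n. of_bool (s j = b)) = real (card {j. j < n \<and> s j = b})"
      by (simp add: sum_of_bool_eq[OF finite_lessThan finite_lessThan] Int_def lessThan_def conj_commute)
    then show "?G s * (\<Sum>j<n. of_bool (s j = b)) = indicator (coins_mixed n) s"
      by (simp add: coins_mixed_def indicator_def)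
  qed
  finally show ?thesis
    by simp
qed

lemma expectation_both_groups_group_freq:
  assumes "\<And>i s. i < n \<Longrightarrow> r i s \<in> {0..1}"
  shows "measure_pmf.expectation (coin_reports_pmf n r)
           (\<lambda>\<omega>. indicator (both_groups n) \<omega> * group_freq n b \<omega>) =
         (\<Sum>i<n. r i b) / real n * measure_pmf.prob (coins_pmf n) (coins_mixed n)"
proof -
  let ?G = "\<lambda>s. indicator (coins_mixed n) s / real (card {j. j < n \<and> s j = b}) :: real"
  have "measure_pmf.expectation (coin_reports_pmf n r)
          (\<lambda>\<omega>. indicator (both_groups n) \<omega> * group_freq n b \<omega>) =
        measure_pmf.expectation (coins_pmf n) (\<lambda>s. ?G s * (\<Sum>i<n. of_bool (s i = b) * r i b))"
    by (simp add: coin_reports_pmf_eq_bind expectation_bind_pmf_finite expectation_reports_given_coins[OF assms])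
  also have "\<dots> = (\<Sum>i<n. r i b * measure_pmf.expectation (coins_pmf n) (\<lambda>s. ?G s * of_bool (s i = b)))"
  proof -
    have "?G s * (\<Sum>i<n. of_bool (s i = b) * r i b) = (\<Sum>i<n. r i b * (?G s * of_bool (s i = b)))" for s
      by (subst sum_distrib_left) (simp only: mult_ac)
    then show ?thesis
      by (simp only: Bochner_Integration.integral_sum integrable_measure_pmf_finite finite_set_coins_pmf
          integral_mult_right_zero)
  qed
  also have "\<dots> = (\<Sum>i<n. r i b * (measure_pmf.prob (coins_pmf n) (coins_mixed n) / real n))"
  proof -
    have share: "measure_pmf.expectation (coins_pmf n) (\<lambda>s. ?G s * of_bool (s i = b)) =
                 measure_pmf.prob (coins_pmf n) (coins_mixed n) / real n" if "i < n" for i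
      using expectation_coins_share[OF that, of b] that by (simp add: eq_divide_eq mult.commute)
    show ?thesis
      by (intro sum.cong refl) (simp only: lessThan_iff share)
  qed
  finally show ?thesis
    by (simp add: sum_distrib_right sum_divide_distrib)
qed

lemma expectation_cond_group_freq:
  assumes "\<And>i s. i < n \<Longrightarrow> r i s \<in> {0..1}"
    and "measure_pmf.prob (coin_reports_pmf n r) (both_groups n) \<noteq> 0"
  shows "measure_pmf.expectation (cond_pmf (coin_reports_pmf n r) (both_groups n)) (group_freq n b) =
         (\<Sum>i<n. r i b) / real n"
  using assms
  by (simp add: expectation_cond_pmf_finite expectation_both_groups_group_freq prob_both_groups)

lemma expectation_cond_group_freq_diff:
  assumes "\<And>i s. i < n \<Longrightarrow> r i s \<in> {0..1}"
    and "measure_pmf.prob (coin_reports_pmf n r) (both_groups n) \<noteq> 0"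
  shows "measure_pmf.expectation (cond_pmf (coin_reports_pmf n r) (both_groups n))
           (\<lambda>\<omega>. group_freq n True \<omega> - group_freq n False \<omega>) =
         (\<Sum>i<n. r i True - r i False) / real n"
  using assms
  by (simp add: integrable_measure_pmf_finite finite_set_cond_pmf
      expectation_cond_group_freq sum_subtractf diff_divide_distrib)

lemma expectation_cond_group_freq_complement:
  assumes "\<And>i s. i < n \<Longrightarrow> r i s \<in> {0..1}"
    and "measure_pmf.prob (coin_reports_pmf n r) (both_groups n) \<noteq> 0"
  shows "measure_pmf.expectation (cond_pmf (coin_reports_pmf n r) (both_groups n))
           (\<lambda>\<omega>. 1 - group_freq n True \<omega> - group_freq n False \<omega>) =
         (\<Sum>i<n. 1 - r i True - r i False) / real n"
proof -
  have "n \<noteq> 0"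
  proof
    assume "n = 0"
    then have "both_groups n = {}"
      by (simp add: both_groups_def)
    with assms(2) show False
      by simp
  qed
  then show ?thesis
    using assms
    by (simp add: integrable_measure_pmf_finite finite_set_cond_pmf
        expectation_cond_group_freq sum_subtractf diff_divide_distrib)
qed

lemma p_eps_bounds: "0 < p_eps \<epsilon>" "p_eps \<epsilon> < 1"
  by (simp_all add: p_eps_def add_pos_pos)

lemma p_eps_gt_half:
  assumes "0 < \<epsilon>"
  shows "1 / 2 < p_eps \<epsilon>"
proof -
  have "1 < exp \<epsilon>" "0 < exp \<epsilon> + 1"
    using assms by (simp_all add: add_pos_pos)
  then show ?thesis
    by (simp add: p_eps_def less_divide_eq)
qed

lemma prob_b1_eq_p_eps:
  "prob_b1 \<epsilon> v' s = (case v' of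
      None \<Rightarrow> 1 - p_eps \<epsilon>
    | Some x \<Rightarrow> (if s then 2 * p_eps \<epsilon> - 1 else 1 - 2 * p_eps \<epsilon>) * (x / 2) + 1 / 2)"
proof -
  have "exp \<epsilon> + 1 \<noteq> 0"
    using exp_gt_zero[of \<epsilon>] by linarith
  then have "1 / (exp \<epsilon> + 1) = 1 - p_eps \<epsilon>"
    and "(exp \<epsilon> - 1) / (exp \<epsilon> + 1) = 2 * p_eps \<epsilon> - 1"
    and "(1 - exp \<epsilon>) / (1 + exp \<epsilon>) = 1 - 2 * p_eps \<epsilon>"
    by (simp_all add: p_eps_def field_simps)
  then show ?thesis
    by (simp add: prob_b1_def split: option.split)
qed

lemma prob_b1_bounds:
  assumes "set_option v' \<subseteq> {-1..1}"
  shows "prob_b1 \<epsilon> v' s \<in> {0..1}"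
proof (cases v')
  case (Some x)
  have "\<bar>x\<bar> \<le> 1" "\<bar>2 * p_eps \<epsilon> - 1\<bar> \<le> 1"
    using assms Some p_eps_bounds[of \<epsilon>] by auto
  then have "\<bar>(2 * p_eps \<epsilon> - 1) * x\<bar> \<le> 1"
    by (simp add: abs_mult mult_le_one)
  moreover have "(1 - 2 * p_eps \<epsilon>) * x = - ((2 * p_eps \<epsilon> - 1) * x)"
    by (simp add: algebra_simps)
  ultimately show ?thesis
    using Some by (auto simp: prob_b1_eq_p_eps abs_le_iff)
qed (use p_eps_bounds[of \<epsilon>] in \<open>simp add: prob_b1_eq_p_eps\<close>)

lemma prob_b1_diff:
  "prob_b1 \<epsilon> v' True - prob_b1 \<epsilon> v' False = (2 * p_eps \<epsilon> - 1) * (case v' of None \<Rightarrow> 0 | Some x \<Rightarrow> x)"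
  by (simp add: prob_b1_eq_p_eps algebra_simps split: option.split)

lemma prob_b1_complement:
  "1 - prob_b1 \<epsilon> v' True - prob_b1 \<epsilon> v' False = (2 * p_eps \<epsilon> - 1) * of_bool (v' = None)"
  by (simp add: prob_b1_eq_p_eps algebra_simps split: option.split)

lemma sum_prob_b1_diff:
  fixes n :: nat
  shows "(\<Sum>i<n. prob_b1 \<epsilon> (v_prime \<epsilon> (v i) (eu i)) True - prob_b1 \<epsilon> (v_prime \<epsilon> (v i) (eu i)) False) =
         (2 * p_eps \<epsilon> - 1) * (\<Sum>i\<in>{i. i < n \<and> eu i \<ge> \<epsilon>}. v i)"
proof -
  have "(\<Sum>i<n. case v_prime \<epsilon> (v i) (eu i) of None \<Rightarrow> 0 | Some x \<Rightarrow> x) =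
        (\<Sum>i<n. if \<epsilon> \<le> eu i then v i else 0)"
    by (intro sum.cong) (simp_all add: v_prime_def)
  also have "\<dots> = sum v {i\<in>{..<n}. \<epsilon> \<le> eu i}"
    by (subst sum.inter_filter) simp_all
  finally show ?thesis
    by (simp add: prob_b1_diff sum_distrib_left[symmetric] lessThan_def)
qed

lemma sum_prob_b1_complement:
  fixes n :: nat
  shows "(\<Sum>i<n. 1 - prob_b1 \<epsilon> (v_prime \<epsilon> (v i) (eu i)) True - prob_b1 \<epsilon> (v_prime \<epsilon> (v i) (eu i)) False) =
         (2 * p_eps \<epsilon> - 1) * real (card {i. i < n \<and> eu i < \<epsilon>})"
proof -
  have "(\<Sum>i<n. of_bool (v_prime \<epsilon> (v i) (eu i) = None)) = (\<Sum>i<n. if eu i < \<epsilon> then 1 else 0 :: real)"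
    by (intro sum.cong) (simp_all add: v_prime_def not_le)
  also have "\<dots> = (\<Sum>i\<in>{i\<in>{..<n}. eu i < \<epsilon>}. 1)"
    by (subst sum.inter_filter) simp_all
  finally show ?thesis
    by (simp add: prob_b1_complement sum_distrib_left[symmetric] lessThan_def)
qed

theorem theorem5:
  fixes \<epsilon> :: real and n :: nat and v eu :: "nat \<Rightarrow> real"
  assumes "\<epsilon> > 0" and "n \<ge> 1"
    and "\<And>i. i < n \<Longrightarrow> v i \<in> {-1..1}"
    and "measure_pmf.prob (reports_pmf \<epsilon> n v eu) (both_groups n) \<noteq> 0"
  shows "measure_pmf.expectation (cond_pmf (reports_pmf \<epsilon> n v eu) (both_groups n)) (s_star \<epsilon> n)
           = (\<Sum>i\<in>{i. i < n \<and> eu i \<ge> \<epsilon>}. v i)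
       \<and> measure_pmf.expectation (cond_pmf (reports_pmf \<epsilon> n v eu) (both_groups n)) (f_bot_star \<epsilon> n)
           = real (card {i. i < n \<and> eu i < \<epsilon>}) / real n"
proof -
  define r where "r = (\<lambda>i. prob_b1 \<epsilon> (v_prime \<epsilon> (v i) (eu i)))"
  have reports: "reports_pmf \<epsilon> n v eu = coin_reports_pmf n r"
    unfolding r_def by (rule reports_pmf_eq_coin_reports_pmf)
  have r_bounds: "r i s \<in> {0..1}" if "i < n" for i s
    unfolding r_def using assms(3)[OF that] by (intro prob_b1_bounds) (simp add: v_prime_def)
  have "2 * p_eps \<epsilon> - 1 > 0" and "real n > 0"
    using p_eps_gt_half[OF assms(1)] assms(2) by simp_all
  moreover have "measure_pmf.expectation (cond_pmf (reports_pmf \<epsilon> n v eu) (both_groups n)) (s_star \<epsilon> n) =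
        real n / (2 * p_eps \<epsilon> - 1) * ((\<Sum>i<n. r i True - r i False) / real n)"
    using expectation_cond_group_freq_diff[OF r_bounds] assms(4)
    by (simp add: reports s_star_def[abs_def] f_POS_eq_group_freq f_NEG_eq_group_freq)
  moreover have "measure_pmf.expectation (cond_pmf (reports_pmf \<epsilon> n v eu) (both_groups n)) (f_bot_star \<epsilon> n) =
        (\<Sum>i<n. 1 - r i True - r i False) / real n / (2 * p_eps \<epsilon> - 1)"
    using expectation_cond_group_freq_complement[OF r_bounds] assms(4)
    by (simp add: reports f_bot_star_def[abs_def] f_POS_eq_group_freq f_NEG_eq_group_freq)
  ultimately show ?thesis
    by (simp add: r_def sum_prob_b1_diff sum_prob_b1_complement)
qed

end
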